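(* Let $f_1=k_1\in\mathbb R\setminus\{0\}$, let $f_2=f_2(x^1)$ be a smooth nowhere-vanishing function depending only on $x^1$, let $f_3=k_3\in\mathbb R\setminus\{0\}$, and $g=\frac{1}{k_1^2}dx^1\otimes dx^1+\frac{1}{f_2^2}dx^2\otimes dx^2+\frac{1}{k_3^2}dx^3\otimes dx^3$. Let $F_0$ satisfy $F_0'=-\frac{f_2^2}{k_1}$. Then $V=\sum_{k=1}^3V^kE_k$, with $E_i=f_i\frac{\partial}{\partial x^i}$, is a Killing vector field of $(\mathbb R^3,g)$ if and only if one of the following holds: (i) $V^1=0$, $V^2(x^1)=\frac{c_1}{f_2(x^1)}$, $V^3=c_2$, with $c_1,c_2\in\mathbb R$; (ii) $f_2=k_2$ is constant and $V^1(x^2,x^3)=c_1x^2+c_2x^3+c_3$, $V^2(x^1,x^3)=-\frac{c_1k_2}{k_1}x^1-c_4k_2x^3+c_5$, $V^3(x^1,x^2)=-\frac{c_2k_3}{k_1}x^1+c_4k_3x^2+c_6$, with $c_1,\dots,c_6\in\mathbb R$; (iii) $f_2(x^1)=a_1e^{a_2x^1}$ with $a_1,a_2\in\mathbb R\setminus\{0\}$, and $V^1(x^2)=c_1x^2+c_2$, $V^2(x^1,x^2)=k_1\left(\frac{f_2'}{f_2^2}\right)(x^1)\left[\frac{c_1}{2}(x^2)^2+c_2x^2+c_3\right]+\frac{c_1F_0(x^1)+c_4}{f_2(x^1)}$, $V^3=c_3$, with $c_1,\dots,c_4\in\mathbb R$; (iv) the function $k:=\frac{k_1^2}{f_2^2}\left(\frac{f_2'}{f_2}\right)'$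 is a constant in $(0,+\infty)$, and $V^1(x^2)=c_1\cos(\sqrt{k}x^2)+c_2\sin(\sqrt{k}x^2)$, $V^2(x^1,x^2)=k_1\left(\frac{f_2'}{f_2^2}\right)(x^1)\left[\frac{1}{\sqrt{k}}\big(c_1\sin(\sqrt{k}x^2)-c_2\cos(\sqrt{k}x^2)\big)+c_3\right]+\frac{c_3kF_0(x^1)+c_4}{f_2(x^1)}$, $V^3=c_3$, with $c_1,\dots,c_4\in\mathbb R$; (v) the function $k:=\frac{k_1^2}{f_2^2}\left(\frac{f_2'}{f_2}\right)'$ is a constant in $(-\infty,0)$, and $V^1(x^2)=c_1e^{\sqrt{-k}x^2}+c_2e^{-\sqrt{-k}x^2}$, $V^2(x^1,x^2)=k_1\left(\frac{f_2'}{f_2^2}\right)(x^1)\left[\frac{1}{\sqrt{-k}}\big(c_1e^{\sqrt{-k}x^2}-c_2e^{-\sqrt{-k}x^2}\big)+c_3\right]+\frac{c_3kF_0(x^1)+c_4}{f_2(x^1)}$, $V^3=c_3$, with $c_1,\dots,c_4\in\mathbb R$.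
   Context: $x^1,x^2,x^3$ are the standard coordinates on $\mathbb R^3$; a prime denotes the derivative with respect to $x^1$; $V^k$ are smooth functions and writing $h(x^i)$ or $h(x^i,x^j)$ means $h$ depends only on those variables. A vector field $V$ is Killing if $\mathcal L_Vg=0$. *)

theory Defs
  imports "HOL-Analysis.Analysis"
begin

definition pd :: "nat \<Rightarrow> (real \<Rightarrow> real \<Rightarrow> real \<Rightarrow> real) \<Rightarrow> real \<Rightarrow> real \<Rightarrow> real \<Rightarrow> real" where
  "pd i h x1 x2 x3 =
     (if i = 1 then deriv (\<lambda>t. h t x2 x3) x1
      else if i = 2 then deriv (\<lambda>t. h x1 t x3) x2
      else deriv (\<lambda>t. h x1 x2 t) x3)"

fun iter_pd :: "nat list \<Rightarrow> (real \<Rightarrow> real \<Rightarrow> real \<Rightarrow> real) \<Rightarrow> real \<Rightarrow> real \<Rightarrow> real \<Rightarrow> real" where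
  "iter_pd [] h = h"
| "iter_pd (i # is) h = pd i (iter_pd is h)"

definition smooth3 :: "(real \<Rightarrow> real \<Rightarrow> real \<Rightarrow> real) \<Rightarrow> bool" where
  "smooth3 h \<longleftrightarrow> (\<forall>is. set is \<subseteq> {1,2,3} \<longrightarrow>
      continuous_on UNIV (\<lambda>(x1, x2, x3). iter_pd is h x1 x2 x3) \<and>
      (\<forall>x1 x2 x3. (\<lambda>t. iter_pd is h t x2 x3) differentiable (at x1) \<and>
                   (\<lambda>t. iter_pd is h x1 t x3) differentiable (at x2) \<and>
                   (\<lambda>t. iter_pd is h x1 x2 t) differentiable (at x3)))"

definition smooth1 :: "(real \<Rightarrow> real) \<Rightarrow> bool" where
  "smooth1 f \<longleftrightarrow> (\<forall>n x. (deriv ^^ n) f differentiable (at x))"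

text \<open>Coordinate expression of the Lie derivative (L_W g)_{ij} of a (0,2)-tensor g with
  components g i j along the vector field with coordinate components W k:
  (L_W g)_{ij} = sum_k (W^k d_k g_{ij} + g_{kj} d_i W^k + g_{ik} d_j W^k).\<close>
definition lie_metric ::
  "(nat \<Rightarrow> nat \<Rightarrow> real \<Rightarrow> real \<Rightarrow> real \<Rightarrow> real) \<Rightarrow> (nat \<Rightarrow> real \<Rightarrow> real \<Rightarrow> real \<Rightarrow> real)
   \<Rightarrow> nat \<Rightarrow> nat \<Rightarrow> real \<Rightarrow> real \<Rightarrow> real \<Rightarrow> real" where
  "lie_metric g W i j x1 x2 x3 =
     (\<Sum>k\<in>{1,2,3}. W k x1 x2 x3 * pd k (g i j) x1 x2 x3
                  + g k j x1 x2 x3 * pd i (W k) x1 x2 x3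
                  + g i k x1 x2 x3 * pd j (W k) x1 x2 x3)"

definition is_killing ::
  "(nat \<Rightarrow> nat \<Rightarrow> real \<Rightarrow> real \<Rightarrow> real \<Rightarrow> real) \<Rightarrow> (nat \<Rightarrow> real \<Rightarrow> real \<Rightarrow> real \<Rightarrow> real) \<Rightarrow> bool" where
  "is_killing g W \<longleftrightarrow> (\<forall>i\<in>{1,2,3}. \<forall>j\<in>{1,2,3}. \<forall>x1 x2 x3. lie_metric g W i j x1 x2 x3 = 0)"

end

theory Submission
  imports Defs
begin

text \<open>In the orthonormal frame E_i = f_i \<partial>_i the Killing equations are first-order equations
  for V1, V2, V3. They make V1 independent of x1 and V3 of x3, and the (1,3)-equation then forces
  V1 = \<sigma>(x2) x3 + \<alpha>(x2) and V3 = -(k3/k1) \<sigma>(x2) x1 + \<beta>(x2). The x3-coefficient of the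
  (1,2)-equation forces \<sigma> to be constant. If f2 is constant the metric is flat and the remaining
  equations give family (ii). Otherwise \<sigma> = 0, \<beta> is constant and U = f2 V2 depends on (x1, x2)
  only, with \<partial>_2 U = k1 (log f2)' \<alpha> and \<partial>_1 U = -(f2^2/k1) \<alpha>'. Equating the mixed partials
  separates the variables: either \<alpha> = 0, which gives the translations (i), or
  k1^2/f2^2 (log f2)'' is a constant k and \<alpha>'' = -k \<alpha>. Solving this equation according to the
  sign of k, and recovering U from its gradient with the help of F0, gives (iii)-(v).\<close>

type_synonym scalar_field = "real \<Rightarrow> real \<Rightarrow> real \<Rightarrow> real"

text \<open>(f1 \<partial>_1, f2 \<partial>_2, f3 \<partial>_3) is an orthonormal frame of frame_metric f1 f2 f3, and
  frame_field lists the coordinate components of V1 E1 + V2 E2 + V3 E3 in that frame.\<close>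
abbreviation frame_metric ::
  "real \<Rightarrow> (real \<Rightarrow> real) \<Rightarrow> real \<Rightarrow> nat \<Rightarrow> nat \<Rightarrow> scalar_field" where
  "frame_metric f1 f2 f3 \<equiv> \<lambda>i j x1 x2 x3.
     if i \<noteq> j then 0 else if i = 1 then 1 / f1\<^sup>2 else if i = 2 then 1 / (f2 x1)\<^sup>2 else 1 / f3\<^sup>2"

abbreviation frame_field ::
  "real \<Rightarrow> (real \<Rightarrow> real) \<Rightarrow> real \<Rightarrow> scalar_field \<Rightarrow> scalar_field \<Rightarrow> scalar_field
   \<Rightarrow> nat \<Rightarrow> scalar_field" where
  "frame_field f1 f2 f3 V1 V2 V3 \<equiv> \<lambda>i x1 x2 x3.
     if i = 1 then f1 * V1 x1 x2 x3 else if i = 2 then f2 x1 * V2 x1 x2 x3 else f3 * V3 x1 x2 x3"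

definition log_deriv :: "(real \<Rightarrow> real) \<Rightarrow> real \<Rightarrow> real" where
  "log_deriv f x = deriv f x / f x"

subsection \<open>Calculus in one and two variables\<close>

lemma DERIV_const_imp_affine:
  fixes f :: "real \<Rightarrow> real"
  assumes "\<And>x. (f has_real_derivative c) (at x)"
  shows "f x = c * x + f 0"
  using DERIV_const_ratio_const[of 0 x f c] assms by (cases "x = 0") (auto simp: algebra_simps)

lemma DERIV_proportional_imp_exp:
  fixes f :: "real \<Rightarrow> real"
  assumes "\<And>x. (f has_real_derivative a * f x) (at x)"
  shows "f x = f 0 * exp (a * x)"
proof -
  have "\<forall>x. ((\<lambda>x. f x * exp (- a * x)) has_real_derivative 0) (at x)"
    using assms by (auto intro!: derivative_eq_intros simp: algebra_simps)
  from DERIV_isconst_all[OF this, of x 0] show ?thesis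
    by (simp add: exp_minus field_simps)
qed

lemma pd1_eqI:
  assumes "\<And>t. V t x2 x3 = g t" "(g has_real_derivative D) (at x1)"
  shows "pd 1 V x1 x2 x3 = D"
proof -
  have "(\<lambda>t. V t x2 x3) = g"
    using assms(1) by (rule ext)
  with assms(2) show ?thesis
    by (simp add: pd_def DERIV_imp_deriv)
qed

lemma pd2_eqI:
  assumes "\<And>t. V x1 t x3 = g t" "(g has_real_derivative D) (at x2)"
  shows "pd 2 V x1 x2 x3 = D"
proof -
  have "(\<lambda>t. V x1 t x3) = g"
    using assms(1) by (rule ext)
  with assms(2) show ?thesis
    by (simp add: pd_def DERIV_imp_deriv)
qed

lemma pd3_eqI:
  assumes "\<And>t. V x1 x2 t = g t" "(g has_real_derivative D) (at x3)"
  shows "pd 3 V x1 x2 x3 = D"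
proof -
  have "(\<lambda>t. V x1 x2 t) = g"
    using assms(1) by (rule ext)
  with assms(2) show ?thesis
    by (simp add: pd_def DERIV_imp_deriv)
qed

lemma harmonic_ode_zero:
  fixes E E' :: "real \<Rightarrow> real"
  assumes "s \<noteq> 0"
    and "\<And>x. (E has_real_derivative E' x) (at x)"
    and "\<And>x. (E' has_real_derivative - s\<^sup>2 * E x) (at x)"
    and "E 0 = 0" "E' 0 = 0"
  shows "E x = 0"
proof -
  have "\<forall>x. ((\<lambda>x. (E' x)\<^sup>2 + s\<^sup>2 * (E x)\<^sup>2) has_real_derivative 0) (at x)"
    using assms(2,3) by (auto intro!: derivative_eq_intros simp: algebra_simps power2_eq_square)
  from DERIV_isconst_all[OF this, of x 0] assms(4,5) have "(E' x)\<^sup>2 + s\<^sup>2 * (E x)\<^sup>2 = 0"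
    by simp
  with \<open>s \<noteq> 0\<close> show ?thesis
    by (simp add: add_nonneg_eq_0_iff)
qed

lemma hyperbolic_ode_zero:
  fixes E E' :: "real \<Rightarrow> real"
  assumes "\<And>x. (E has_real_derivative E' x) (at x)"
    and "\<And>x. (E' has_real_derivative s\<^sup>2 * E x) (at x)"
    and "E 0 = 0" "E' 0 = 0"
  shows "E x = 0"
proof -
  have "\<forall>x. ((\<lambda>x. (E' x - s * E x) * exp (s * x)) has_real_derivative 0) (at x)"
    using assms(1,2) by (auto intro!: derivative_eq_intros simp: algebra_simps power2_eq_square)
  from DERIV_isconst_all[OF this] assms(3,4) have "E' y = s * E y" for y
    by (metis exp_not_eq_zero mult_eq_0_iff mult_zero_left right_minus_eq)
  then have "\<forall>x. ((\<lambda>x. E x * exp (- s * x)) has_real_derivative 0) (at x)"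
    using assms(1) by (auto intro!: derivative_eq_intros simp: algebra_simps)
  from DERIV_isconst_all[OF this, of x 0] assms(3) show ?thesis
    by simp
qed

lemma harmonic_ode_solution:
  fixes f f' :: "real \<Rightarrow> real"
  assumes "s \<noteq> 0"
    and "\<And>x. (f has_real_derivative f' x) (at x)"
    and "\<And>x. (f' has_real_derivative - s\<^sup>2 * f x) (at x)"
  shows "f x = f 0 * cos (s * x) + f' 0 / s * sin (s * x)"
proof -
  have "f x - (f 0 * cos (s * x) + f' 0 / s * sin (s * x)) = 0"
  proof (rule harmonic_ode_zero[OF \<open>s \<noteq> 0\<close>,
      of "\<lambda>x. f x - (f 0 * cos (s * x) + f' 0 / s * sin (s * x))"
         "\<lambda>x. f' x - (- f 0 * s * sin (s * x) + f' 0 * cos (s * x))"])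
    show "((\<lambda>x. f x - (f 0 * cos (s * x) + f' 0 / s * sin (s * x))) has_real_derivative
        f' x - (- f 0 * s * sin (s * x) + f' 0 * cos (s * x))) (at x)" for x
      using assms by (auto intro!: derivative_eq_intros simp: algebra_simps)
    show "((\<lambda>x. f' x - (- f 0 * s * sin (s * x) + f' 0 * cos (s * x))) has_real_derivative
        - s\<^sup>2 * (f x - (f 0 * cos (s * x) + f' 0 / s * sin (s * x)))) (at x)" for x
      using assms by (auto intro!: derivative_eq_intros simp: algebra_simps power2_eq_square)
  qed (use assms in auto)
  then show ?thesis
    by simp
qed

lemma hyperbolic_ode_solution:
  fixes f f' :: "real \<Rightarrow> real"
  assumes "s \<noteq> 0"
    and "\<And>x. (f has_real_derivative f' x) (at x)"
    and "\<And>x. (f' has_real_derivative s\<^sup>2 * f x) (at x)"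
  shows "f x = (f 0 + f' 0 / s) / 2 * exp (s * x) + (f 0 - f' 0 / s) / 2 * exp (- s * x)"
proof -
  define A B where "A = (f 0 + f' 0 / s) / 2" and "B = (f 0 - f' 0 / s) / 2"
  have "f x - (A * exp (s * x) + B * exp (- s * x)) = 0"
  proof (rule hyperbolic_ode_zero[of "\<lambda>x. f x - (A * exp (s * x) + B * exp (- s * x))"
        "\<lambda>x. f' x - (A * s * exp (s * x) - B * s * exp (- s * x))"])
    show "((\<lambda>x. f x - (A * exp (s * x) + B * exp (- s * x))) has_real_derivative
        f' x - (A * s * exp (s * x) - B * s * exp (- s * x))) (at x)" for x
      using assms by (auto intro!: derivative_eq_intros simp: algebra_simps)
    show "((\<lambda>x. f' x - (A * s * exp (s * x) - B * s * exp (- s * x))) has_real_derivative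
        s\<^sup>2 * (f x - (A * exp (s * x) + B * exp (- s * x)))) (at x)" for x
      using assms by (auto intro!: derivative_eq_intros simp: algebra_simps power2_eq_square)
  qed (use \<open>s \<noteq> 0\<close> in \<open>auto simp: A_def B_def field_simps\<close>)
  then show ?thesis
    by (simp add: A_def B_def)
qed

lemma eq_plus_const_if_same_partials:
  fixes U G D E :: "real \<Rightarrow> real \<Rightarrow> real"
  assumes "\<And>x1 x2. ((\<lambda>t. U t x2) has_real_derivative D x1 x2) (at x1)"
    and "\<And>x1 x2. ((\<lambda>t. G t x2) has_real_derivative D x1 x2) (at x1)"
    and "\<And>x1 x2. ((\<lambda>t. U x1 t) has_real_derivative E x1 x2) (at x2)"
    and "\<And>x1 x2. ((\<lambda>t. G x1 t) has_real_derivative E x1 x2) (at x2)"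
  shows "U x1 x2 = G x1 x2 + (U 0 0 - G 0 0)"
proof -
  have "((\<lambda>t. U t x2 - G t x2) has_real_derivative 0) (at x)" for x
    using DERIV_diff[OF assms(1)[of x2 x] assms(2)[of x2 x]] by simp
  then have "U x1 x2 - G x1 x2 = U 0 x2 - G 0 x2"
    using DERIV_isconst_all by blast
  also have "((\<lambda>t. U 0 t - G 0 t) has_real_derivative 0) (at x)" for x
    using DERIV_diff[OF assms(3)[of 0 x] assms(4)[of 0 x]] by simp
  then have "U 0 x2 - G 0 x2 = U 0 0 - G 0 0"
    using DERIV_isconst_all by blast
  finally show ?thesis
    by simp
qed

text \<open>Symmetry of second derivatives is not assumed: writing p = c * p x0 (with c = 0 if p
  vanishes identically), U x1 - c x1 * U x0 is independent of x2, which expresses the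
  x1-derivative of U through U x0; that expression is then differentiated in x2.\<close>
lemma separable_mixed_partials:
  fixes U :: "real \<Rightarrow> real \<Rightarrow> real"
  assumes U2: "\<And>x1 x2. ((\<lambda>t. U x1 t) has_real_derivative p x1 * q x2) (at x2)"
    and U1: "\<And>x1 x2. ((\<lambda>t. U t x2) has_real_derivative r x1 * s x2) (at x1)"
    and p: "\<And>x. (p has_real_derivative p' x) (at x)"
    and s: "\<And>x. (s has_real_derivative s' x) (at x)"
  shows "p' x1 * q x2 = r x1 * s' x2"
proof -
  obtain x0 c c' where pc: "\<And>x. p x = c x * p x0" and c: "\<And>x. (c has_real_derivative c' x) (at x)"
    and p'c': "\<And>x. p' x = c' x * p x0"
  proof (cases "\<exists>x0. p x0 \<noteq> 0")
    case True
    then obtain x0 where "p x0 \<noteq> 0" by blast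
    then show ?thesis
      by (intro that[of "\<lambda>x. p x / p x0" x0 "\<lambda>x. p' x / p x0"]) (auto intro!: derivative_eq_intros p)
  next
    case False
    then have "p = (\<lambda>_. 0)" by auto
    then have "p' x = 0" for x
      using p[of x] DERIV_unique[OF DERIV_const] by metis
    with False show ?thesis
      by (intro that[of "\<lambda>_. 0" 0 "\<lambda>_. 0"]) auto
  qed
  have "((\<lambda>t. U x1 t - c x1 * U x0 t) has_real_derivative 0) (at x)" for x1 x
    using DERIV_diff[OF U2[of x1 x] DERIV_cmult[OF U2[of x0 x], of "c x1"]] pc[of x1]
    by (simp add: algebra_simps)
  then have U: "U x1 x2 = c x1 * (U x0 x2 - U x0 0) + U x1 0" for x1 x2
    using DERIV_isconst_all[of "\<lambda>t. U x1 t - c x1 * U x0 t" x2 0] by (simp add: algebra_simps)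
  have "((\<lambda>t. c t * (U x0 x2 - U x0 0) + U t 0) has_real_derivative
      c' x1 * (U x0 x2 - U x0 0) + r x1 * s 0) (at x1)" for x2
    using DERIV_add[OF DERIV_cmult_right[OF c] U1[of 0]] by simp
  moreover have "(\<lambda>t. c t * (U x0 x2 - U x0 0) + U t 0) = (\<lambda>t. U t x2)" for x2
    using U[symmetric] by (rule ext)
  ultimately have "r x1 * s x2 = c' x1 * (U x0 x2 - U x0 0) + r x1 * s 0" for x2
    using U1[of x2 x1] DERIV_unique by metis
  then have "(\<lambda>t. r x1 * s t) = (\<lambda>t. c' x1 * (U x0 t - U x0 0) + r x1 * s 0)"
    by blast
  moreover have "((\<lambda>t. c' x1 * (U x0 t - U x0 0) + r x1 * s 0) has_real_derivative
      c' x1 * (p x0 * q x2)) (at x2)"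
    using U2[of x0 x2] by (auto intro!: derivative_eq_intros)
  ultimately have "r x1 * s' x2 = c' x1 * (p x0 * q x2)"
    using DERIV_cmult[OF s, of "r x1" x2] DERIV_unique by metis
  then show ?thesis
    using p'c'[of x1] by (simp add: algebra_simps)
qed

lemma iter_pd_append: "iter_pd (ls @ ms) h = iter_pd ls (iter_pd ms h)"
  by (induction ls) auto

lemma smooth3_pd:
  assumes "smooth3 V" "i \<in> {1,2,3}"
  shows "smooth3 (pd i V)"
proof -
  have "iter_pd ls (pd i V) = iter_pd (ls @ [i]) V" for ls
    by (simp add: iter_pd_append)
  moreover have "set (ls @ [i]) \<subseteq> {1,2,3}" if "set ls \<subseteq> {1,2,3}" for ls
    using that assms(2) by simp
  ultimately show ?thesis
    using assms(1) unfolding smooth3_def by metis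
qed

lemma smooth3_has_partials:
  assumes "smooth3 V"
  shows "((\<lambda>t. V t x2 x3) has_real_derivative pd 1 V x1 x2 x3) (at x1)"
    and "((\<lambda>t. V x1 t x3) has_real_derivative pd 2 V x1 x2 x3) (at x2)"
    and "((\<lambda>t. V x1 x2 t) has_real_derivative pd 3 V x1 x2 x3) (at x3)"
  using assms[unfolded smooth3_def, rule_format, of "[]"]
  by (auto simp: pd_def DERIV_deriv_iff_real_differentiable)

lemma smooth1_has_derivatives:
  assumes "smooth1 f"
  shows "(f has_real_derivative deriv f x) (at x)"
    and "(deriv f has_real_derivative deriv (deriv f) x) (at x)"
proof -
  have "(deriv ^^ 0) f differentiable (at x)" "(deriv ^^ 1) f differentiable (at x)"
    using assms unfolding smooth1_def by blast+
  then show "(f has_real_derivative deriv f x) (at x)"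
    and "(deriv f has_real_derivative deriv (deriv f) x) (at x)"
    by (auto simp: DERIV_deriv_iff_real_differentiable)
qed

lemma log_deriv_has_derivative:
  assumes "smooth1 f" "\<And>x. f x \<noteq> 0"
  shows "(log_deriv f has_real_derivative deriv (log_deriv f) x) (at x)"
proof -
  have "(log_deriv f has_real_derivative
      (deriv (deriv f) x * f x - deriv f x * deriv f x) / (f x * f x)) (at x)"
    unfolding log_deriv_def[abs_def] using assms(2)[of x]
    by (auto intro!: derivative_eq_intros smooth1_has_derivatives[OF assms(1)])
  then show ?thesis
    by (simp add: DERIV_imp_deriv)
qed

subsection \<open>The Killing equations in the orthonormal frame\<close>

lemma is_killing_frame_metric_iff:
  fixes W :: "nat \<Rightarrow> real \<Rightarrow> real \<Rightarrow> real \<Rightarrow> real"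
    and D :: "nat \<Rightarrow> nat \<Rightarrow> real \<Rightarrow> real \<Rightarrow> real \<Rightarrow> real"
  assumes f2: "\<And>x. (f2 has_real_derivative f2' x) (at x)" and f2_nz: "\<And>x. f2 x \<noteq> 0"
    and D1: "\<And>k x1 x2 x3. ((\<lambda>t. W k t x2 x3) has_real_derivative D 1 k x1 x2 x3) (at x1)"
    and D2: "\<And>k x1 x2 x3. ((\<lambda>t. W k x1 t x3) has_real_derivative D 2 k x1 x2 x3) (at x2)"
    and D3: "\<And>k x1 x2 x3. ((\<lambda>t. W k x1 x2 t) has_real_derivative D 3 k x1 x2 x3) (at x3)"
  shows "is_killing (frame_metric k1 f2 k3) W \<longleftrightarrow>
    (\<forall>x1 x2 x3. 2 / k1\<^sup>2 * D 1 1 x1 x2 x3 = 0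
      \<and> W 1 x1 x2 x3 * (- 2 * f2' x1 / f2 x1 ^ 3) + 2 / (f2 x1)\<^sup>2 * D 2 2 x1 x2 x3 = 0
      \<and> 2 / k3\<^sup>2 * D 3 3 x1 x2 x3 = 0
      \<and> 1 / (f2 x1)\<^sup>2 * D 1 2 x1 x2 x3 + 1 / k1\<^sup>2 * D 2 1 x1 x2 x3 = 0
      \<and> 1 / k3\<^sup>2 * D 1 3 x1 x2 x3 + 1 / k1\<^sup>2 * D 3 1 x1 x2 x3 = 0
      \<and> 1 / k3\<^sup>2 * D 2 3 x1 x2 x3 + 1 / (f2 x1)\<^sup>2 * D 3 2 x1 x2 x3 = 0)"
proof -
  have pd_W: "pd i (W k) x1 x2 x3 = D i k x1 x2 x3" if "i \<in> {1,2,3}" for i k x1 x2 x3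
    using that D1 D2 D3 by (auto simp: pd_def DERIV_imp_deriv)
  have pd_const: "pd i (\<lambda>x1 x2 x3. c) = (\<lambda>x1 x2 x3. 0)" for i and c :: real
    by (simp add: pd_def fun_eq_iff)
  have "((\<lambda>t. 1 / (f2 t)\<^sup>2) has_real_derivative - 2 * f2' x / f2 x ^ 3) (at x)" for x
    using f2_nz[of x]
    by (auto intro!: derivative_eq_intros f2 simp: field_simps power2_eq_square power3_eq_cube)
  then have pd_g22: "pd i (\<lambda>x1 x2 x3. 1 / (f2 x1)\<^sup>2) x1 x2 x3 =
      (if i = 1 then - 2 * f2' x1 / f2 x1 ^ 3 else 0)" for i x1 x2 x3
    by (simp add: pd_def DERIV_imp_deriv)
  let ?G = "frame_metric k1 f2 k3"
  have lie: "lie_metric ?G W 1 1 x1 x2 x3 = 2 / k1\<^sup>2 * D 1 1 x1 x2 x3"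
     "lie_metric ?G W 2 2 x1 x2 x3 =
        W 1 x1 x2 x3 * (- 2 * f2' x1 / f2 x1 ^ 3) + 2 / (f2 x1)\<^sup>2 * D 2 2 x1 x2 x3"
     "lie_metric ?G W 3 3 x1 x2 x3 = 2 / k3\<^sup>2 * D 3 3 x1 x2 x3"
     "lie_metric ?G W 1 2 x1 x2 x3 = 1 / (f2 x1)\<^sup>2 * D 1 2 x1 x2 x3 + 1 / k1\<^sup>2 * D 2 1 x1 x2 x3"
     "lie_metric ?G W 2 1 x1 x2 x3 = 1 / (f2 x1)\<^sup>2 * D 1 2 x1 x2 x3 + 1 / k1\<^sup>2 * D 2 1 x1 x2 x3"
     "lie_metric ?G W 1 3 x1 x2 x3 = 1 / k3\<^sup>2 * D 1 3 x1 x2 x3 + 1 / k1\<^sup>2 * D 3 1 x1 x2 x3"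
     "lie_metric ?G W 3 1 x1 x2 x3 = 1 / k3\<^sup>2 * D 1 3 x1 x2 x3 + 1 / k1\<^sup>2 * D 3 1 x1 x2 x3"
     "lie_metric ?G W 2 3 x1 x2 x3 = 1 / k3\<^sup>2 * D 2 3 x1 x2 x3 + 1 / (f2 x1)\<^sup>2 * D 3 2 x1 x2 x3"
     "lie_metric ?G W 3 2 x1 x2 x3 = 1 / k3\<^sup>2 * D 2 3 x1 x2 x3 + 1 / (f2 x1)\<^sup>2 * D 3 2 x1 x2 x3"
    for x1 x2 x3
    unfolding lie_metric_def by (simp_all add: pd_W pd_const pd_g22 algebra_simps)
  show ?thesis
    unfolding is_killing_def
    by (simp only: lie ball_simps simp_thms all_conj_distrib) (intro iffI; elim conjE; intro conjI; assumption)
qed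

text \<open>V1x, V1y, ..., V3z are the partial derivatives of the frame components, except that
  W2x is the x1-derivative of f2 V2 rather than of V2.\<close>
lemma is_killing_frame_iff:
  fixes V1 V2 V3 V1x V1y V1z W2x V2y V2z V3x V3y V3z :: "real \<Rightarrow> real \<Rightarrow> real \<Rightarrow> real"
  assumes k1: "k1 \<noteq> 0" and k3: "k3 \<noteq> 0"
    and f2: "\<And>x. (f2 has_real_derivative f2' x) (at x)" and f2_nz: "\<And>x. f2 x \<noteq> 0"
    and V1: "\<And>x1 x2 x3. ((\<lambda>t. V1 t x2 x3) has_real_derivative V1x x1 x2 x3) (at x1)"
      "\<And>x1 x2 x3. ((\<lambda>t. V1 x1 t x3) has_real_derivative V1y x1 x2 x3) (at x2)"
      "\<And>x1 x2 x3. ((\<lambda>t. V1 x1 x2 t) has_real_derivative V1z x1 x2 x3) (at x3)"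
    and V2: "\<And>x1 x2 x3. ((\<lambda>t. f2 t * V2 t x2 x3) has_real_derivative W2x x1 x2 x3) (at x1)"
      "\<And>x1 x2 x3. ((\<lambda>t. V2 x1 t x3) has_real_derivative V2y x1 x2 x3) (at x2)"
      "\<And>x1 x2 x3. ((\<lambda>t. V2 x1 x2 t) has_real_derivative V2z x1 x2 x3) (at x3)"
    and V3: "\<And>x1 x2 x3. ((\<lambda>t. V3 t x2 x3) has_real_derivative V3x x1 x2 x3) (at x1)"
      "\<And>x1 x2 x3. ((\<lambda>t. V3 x1 t x3) has_real_derivative V3y x1 x2 x3) (at x2)"
      "\<And>x1 x2 x3. ((\<lambda>t. V3 x1 x2 t) has_real_derivative V3z x1 x2 x3) (at x3)"
  shows "is_killing (frame_metric k1 f2 k3) (frame_field k1 f2 k3 V1 V2 V3) \<longleftrightarrow>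
    (\<forall>x1 x2 x3. V1x x1 x2 x3 = 0
       \<and> V2y x1 x2 x3 = k1 * V1 x1 x2 x3 * f2' x1 / (f2 x1)\<^sup>2
       \<and> V3z x1 x2 x3 = 0
       \<and> W2x x1 x2 x3 / (f2 x1)\<^sup>2 + V1y x1 x2 x3 / k1 = 0
       \<and> V3x x1 x2 x3 / k3 + V1z x1 x2 x3 / k1 = 0
       \<and> V3y x1 x2 x3 / k3 + V2z x1 x2 x3 / f2 x1 = 0)"
proof -
  let ?W = "frame_field k1 f2 k3 V1 V2 V3"
  define D where "D i k x1 x2 x3 =
    (if k = 1 then k1 * (if i = 1 then V1x x1 x2 x3 else if i = 2 then V1y x1 x2 x3 else V1z x1 x2 x3)
     else if k = 2 then (if i = 1 then W2x x1 x2 x3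
       else if i = 2 then f2 x1 * V2y x1 x2 x3 else f2 x1 * V2z x1 x2 x3)
     else k3 * (if i = 1 then V3x x1 x2 x3 else if i = 2 then V3y x1 x2 x3 else V3z x1 x2 x3))"
    for i k :: nat and x1 x2 x3
  have D1: "((\<lambda>t. ?W k t x2 x3) has_real_derivative D 1 k x1 x2 x3) (at x1)" for k x1 x2 x3
    unfolding D_def using V1(1) V2(1) V3(1) by (auto intro!: derivative_eq_intros)
  have D2: "((\<lambda>t. ?W k x1 t x3) has_real_derivative D 2 k x1 x2 x3) (at x2)" for k x1 x2 x3
    unfolding D_def using V1(2) V2(2) V3(2) by (auto intro!: derivative_eq_intros)
  have D3: "((\<lambda>t. ?W k x1 x2 t) has_real_derivative D 3 k x1 x2 x3) (at x3)" for k x1 x2 x3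
    unfolding D_def using V1(3) V2(3) V3(3) by (auto intro!: derivative_eq_intros)
  have frame_eqs: "(2 / k1\<^sup>2 * D 1 1 x1 x2 x3 = 0
      \<and> ?W 1 x1 x2 x3 * (- 2 * f2' x1 / f2 x1 ^ 3) + 2 / (f2 x1)\<^sup>2 * D 2 2 x1 x2 x3 = 0
      \<and> 2 / k3\<^sup>2 * D 3 3 x1 x2 x3 = 0
      \<and> 1 / (f2 x1)\<^sup>2 * D 1 2 x1 x2 x3 + 1 / k1\<^sup>2 * D 2 1 x1 x2 x3 = 0
      \<and> 1 / k3\<^sup>2 * D 1 3 x1 x2 x3 + 1 / k1\<^sup>2 * D 3 1 x1 x2 x3 = 0
      \<and> 1 / k3\<^sup>2 * D 2 3 x1 x2 x3 + 1 / (f2 x1)\<^sup>2 * D 3 2 x1 x2 x3 = 0) \<longleftrightarrow>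
    (V1x x1 x2 x3 = 0
       \<and> V2y x1 x2 x3 = k1 * V1 x1 x2 x3 * f2' x1 / (f2 x1)\<^sup>2
       \<and> V3z x1 x2 x3 = 0
       \<and> W2x x1 x2 x3 / (f2 x1)\<^sup>2 + V1y x1 x2 x3 / k1 = 0
       \<and> V3x x1 x2 x3 / k3 + V1z x1 x2 x3 / k1 = 0
       \<and> V3y x1 x2 x3 / k3 + V2z x1 x2 x3 / f2 x1 = 0)" for x1 x2 x3
    using k1 k3 f2_nz[of x1]
    by (simp add: D_def field_simps power2_eq_square power3_eq_cube)
  show ?thesis
    by (subst is_killing_frame_metric_iff[OF f2 f2_nz D1 D2 D3]) (simp only: frame_eqs)
qed

subsection \<open>The five families of Killing fields\<close>

definition translation_family :: "(real \<Rightarrow> real) \<Rightarrow> scalar_field \<Rightarrow> scalar_field \<Rightarrow> scalar_field \<Rightarrow> bool"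
  where "translation_family f2 V1 V2 V3 \<longleftrightarrow>
    (\<exists>c1 c2. \<forall>x1 x2 x3. V1 x1 x2 x3 = 0 \<and> V2 x1 x2 x3 = c1 / f2 x1 \<and> V3 x1 x2 x3 = c2)"

definition flat_family ::
  "real \<Rightarrow> real \<Rightarrow> (real \<Rightarrow> real) \<Rightarrow> scalar_field \<Rightarrow> scalar_field \<Rightarrow> scalar_field \<Rightarrow> bool"
  where "flat_family k1 k3 f2 V1 V2 V3 \<longleftrightarrow>
    (\<exists>k2. (\<forall>x. f2 x = k2) \<and>
        (\<exists>c1 c2 c3 c4 c5 c6. \<forall>x1 x2 x3.
           V1 x1 x2 x3 = c1 * x2 + c2 * x3 + c3 \<and>
           V2 x1 x2 x3 = - (c1 * k2 / k1) * x1 - c4 * k2 * x3 + c5 \<and>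
           V3 x1 x2 x3 = - (c2 * k3 / k1) * x1 + c4 * k3 * x2 + c6))"

definition exponential_family ::
  "real \<Rightarrow> (real \<Rightarrow> real) \<Rightarrow> (real \<Rightarrow> real) \<Rightarrow> scalar_field \<Rightarrow> scalar_field \<Rightarrow> scalar_field \<Rightarrow> bool"
  where "exponential_family k1 f2 F0 V1 V2 V3 \<longleftrightarrow>
    (\<exists>a1 a2. a1 \<noteq> 0 \<and> a2 \<noteq> 0 \<and> (\<forall>x. f2 x = a1 * exp (a2 * x)) \<and>
        (\<exists>c1 c2 c3 c4. \<forall>x1 x2 x3.
           V1 x1 x2 x3 = c1 * x2 + c2 \<and>
           V2 x1 x2 x3 = k1 * (deriv f2 x1 / (f2 x1)\<^sup>2) * (c1 / 2 * x2\<^sup>2 + c2 * x2 + c3)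
                         + (c1 * F0 x1 + c4) / f2 x1 \<and>
           V3 x1 x2 x3 = c3))"

definition trigonometric_family ::
  "real \<Rightarrow> (real \<Rightarrow> real) \<Rightarrow> (real \<Rightarrow> real) \<Rightarrow> scalar_field \<Rightarrow> scalar_field \<Rightarrow> scalar_field \<Rightarrow> bool"
  where "trigonometric_family k1 f2 F0 V1 V2 V3 \<longleftrightarrow>
    (\<exists>k. 0 < k \<and>
        (\<forall>x. k1\<^sup>2 / (f2 x)\<^sup>2 * deriv (log_deriv f2) x = k) \<and>
        (\<exists>c1 c2 c3 c4. \<forall>x1 x2 x3.
           V1 x1 x2 x3 = c1 * cos (sqrt k * x2) + c2 * sin (sqrt k * x2) \<and>
           V2 x1 x2 x3 = k1 * (deriv f2 x1 / (f2 x1)\<^sup>2) *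
                           (1 / sqrt k * (c1 * sin (sqrt k * x2) - c2 * cos (sqrt k * x2)) + c3)
                         + (c3 * k * F0 x1 + c4) / f2 x1 \<and>
           V3 x1 x2 x3 = c3))"

definition hyperbolic_family ::
  "real \<Rightarrow> (real \<Rightarrow> real) \<Rightarrow> (real \<Rightarrow> real) \<Rightarrow> scalar_field \<Rightarrow> scalar_field \<Rightarrow> scalar_field \<Rightarrow> bool"
  where "hyperbolic_family k1 f2 F0 V1 V2 V3 \<longleftrightarrow>
    (\<exists>k. k < 0 \<and>
        (\<forall>x. k1\<^sup>2 / (f2 x)\<^sup>2 * deriv (log_deriv f2) x = k) \<and>
        (\<exists>c1 c2 c3 c4. \<forall>x1 x2 x3.
           V1 x1 x2 x3 = c1 * exp (sqrt (- k) * x2) + c2 * exp (- sqrt (- k) * x2) \<and>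
           V2 x1 x2 x3 = k1 * (deriv f2 x1 / (f2 x1)\<^sup>2) *
                           (1 / sqrt (- k) * (c1 * exp (sqrt (- k) * x2) - c2 * exp (- sqrt (- k) * x2)) + c3)
                         + (c3 * k * F0 x1 + c4) / f2 x1 \<and>
           V3 x1 x2 x3 = c3))"

lemma is_killing_translation_family:
  assumes k1: "k1 \<noteq> 0" and k3: "k3 \<noteq> 0"
    and f2: "\<And>x. (f2 has_real_derivative f2' x) (at x)" and f2_nz: "\<And>x. f2 x \<noteq> 0"
    and "translation_family f2 V1 V2 V3"
  shows "is_killing (frame_metric k1 f2 k3) (frame_field k1 f2 k3 V1 V2 V3)"
proof -
  obtain c1 c2 where V: "\<forall>x1 x2 x3. V1 x1 x2 x3 = 0 \<and> V2 x1 x2 x3 = c1 / f2 x1 \<and> V3 x1 x2 x3 = c2"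
    using assms(5) unfolding translation_family_def by blast
  let ?zero = "\<lambda>_ _ _. 0 :: real"
  show ?thesis
    by (rule is_killing_frame_iff[where V1x = ?zero and V1y = ?zero and V1z = ?zero
          and W2x = ?zero and V2y = ?zero and V2z = ?zero and V3x = ?zero and V3y = ?zero
          and V3z = ?zero, THEN iffD2, OF k1 k3 f2 f2_nz])
      (simp_all add: V f2_nz)
qed

lemma is_killing_flat_family:
  assumes k1: "k1 \<noteq> 0" and k3: "k3 \<noteq> 0" and f2_nz: "\<And>x. f2 x \<noteq> 0"
    and "flat_family k1 k3 f2 V1 V2 V3"
  shows "is_killing (frame_metric k1 f2 k3) (frame_field k1 f2 k3 V1 V2 V3)"
proof -
  obtain k2 c1 c2 c3 c4 c5 c6 where f2_eq: "\<forall>x. f2 x = k2"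
    and V: "\<forall>x1 x2 x3.
           V1 x1 x2 x3 = c1 * x2 + c2 * x3 + c3 \<and>
           V2 x1 x2 x3 = - (c1 * k2 / k1) * x1 - c4 * k2 * x3 + c5 \<and>
           V3 x1 x2 x3 = - (c2 * k3 / k1) * x1 + c4 * k3 * x2 + c6"
    using assms(4) unfolding flat_family_def by blast
  have "k2 \<noteq> 0"
    using f2_nz f2_eq by metis
  have f2: "(f2 has_real_derivative 0) (at x)" for x
    using f2_eq by (simp add: fun_eq_iff[symmetric])
  show ?thesis
    by (rule is_killing_frame_iff[where V1x = "\<lambda>_ _ _. 0" and V1y = "\<lambda>_ _ _. c1"
          and V1z = "\<lambda>_ _ _. c2" and W2x = "\<lambda>_ _ _. k2 * (- (c1 * k2 / k1))"
          and V2y = "\<lambda>_ _ _. 0" and V2z = "\<lambda>_ _ _. - c4 * k2"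
          and V3x = "\<lambda>_ _ _. - (c2 * k3 / k1)" and V3y = "\<lambda>_ _ _. c4 * k3" and V3z = "\<lambda>_ _ _. 0",
          THEN iffD2, OF k1 k3 f2 f2_nz])
      (use \<open>k2 \<noteq> 0\<close> k1 k3 in
        \<open>auto intro!: derivative_eq_intros simp: V f2_eq field_simps power2_eq_square\<close>)
qed

text \<open>The common shape of the last three families: f2 V2 = k1 (log f2)' P + m F0 + c.\<close>
lemma is_killing_separable_family:
  assumes k1: "k1 \<noteq> 0" and k3: "k3 \<noteq> 0"
    and f2: "\<And>x. (f2 has_real_derivative deriv f2 x) (at x)" and f2_nz: "\<And>x. f2 x \<noteq> 0"
    and h: "\<And>x. (log_deriv f2 has_real_derivative k * (f2 x)\<^sup>2 / k1\<^sup>2) (at x)"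
    and F0: "\<And>x. (F0 has_real_derivative - (f2 x)\<^sup>2 / k1) (at x)"
    and P: "\<And>x. (P has_real_derivative \<alpha> x) (at x)"
    and \<alpha>: "\<And>x. (\<alpha> has_real_derivative m - k * P x) (at x)"
    and V1: "\<And>x1 x2 x3. V1 x1 x2 x3 = \<alpha> x2"
    and V2: "\<And>x1 x2 x3. V2 x1 x2 x3 = k1 * (deriv f2 x1 / (f2 x1)\<^sup>2) * P x2 + (m * F0 x1 + c) / f2 x1"
    and V3: "\<And>x1 x2 x3. V3 x1 x2 x3 = b"
  shows "is_killing (frame_metric k1 f2 k3) (frame_field k1 f2 k3 V1 V2 V3)"
proof -
  have W2: "(\<lambda>t. f2 t * V2 t x2 x3) = (\<lambda>t. k1 * P x2 * log_deriv f2 t + m * F0 t + c)" for x2 x3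
    using f2_nz by (auto simp: fun_eq_iff V2 log_deriv_def field_simps power2_eq_square)
  let ?zero = "\<lambda>_ _ _. 0 :: real"
  show ?thesis
  proof (rule is_killing_frame_iff[where V1x = ?zero and V1y = "\<lambda>_ x2 _. m - k * P x2"
        and V1z = ?zero and W2x = "\<lambda>x1 x2 _. k1 * P x2 * (k * (f2 x1)\<^sup>2 / k1\<^sup>2) + m * (- (f2 x1)\<^sup>2 / k1)"
        and V2y = "\<lambda>x1 x2 _. k1 * (deriv f2 x1 / (f2 x1)\<^sup>2) * \<alpha> x2" and V2z = ?zero
        and V3x = ?zero and V3y = ?zero and V3z = ?zero, THEN iffD2, OF k1 k3 f2 f2_nz])
    show "((\<lambda>t. f2 t * V2 t x2 x3) has_real_derivative
        k1 * P x2 * (k * (f2 x1)\<^sup>2 / k1\<^sup>2) + m * (- (f2 x1)\<^sup>2 / k1)) (at x1)" for x1 x2 x3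
      unfolding W2 by (auto intro!: derivative_eq_intros h F0 simp: algebra_simps)
  qed (use k1 f2_nz in \<open>auto intro!: derivative_eq_intros P \<alpha> simp: V1 V2 V3 field_simps power2_eq_square\<close>)
qed

lemma log_deriv_has_derivative_if_const:
  assumes "smooth1 f2" "\<And>x. f2 x \<noteq> 0" "k1 \<noteq> 0"
    and "\<forall>x. k1\<^sup>2 / (f2 x)\<^sup>2 * deriv (log_deriv f2) x = k"
  shows "(log_deriv f2 has_real_derivative k * (f2 x)\<^sup>2 / k1\<^sup>2) (at x)"
proof -
  have "deriv (log_deriv f2) x = k * (f2 x)\<^sup>2 / k1\<^sup>2"
    using assms(2-4) by (auto simp: field_simps)
  then show ?thesis
    using log_deriv_has_derivative[OF assms(1,2)] by metis
qed

lemma is_killing_exponential_family: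
  assumes k1: "k1 \<noteq> 0" and k3: "k3 \<noteq> 0" and f2_nz: "\<And>x. f2 x \<noteq> 0"
    and F0: "\<And>x. (F0 has_real_derivative - (f2 x)\<^sup>2 / k1) (at x)"
    and "exponential_family k1 f2 F0 V1 V2 V3"
  shows "is_killing (frame_metric k1 f2 k3) (frame_field k1 f2 k3 V1 V2 V3)"
proof -
  obtain a1 a2 c1 c2 c3 c4 where f2_eq: "\<forall>x. f2 x = a1 * exp (a2 * x)"
    and V: "\<forall>x1 x2 x3.
           V1 x1 x2 x3 = c1 * x2 + c2 \<and>
           V2 x1 x2 x3 = k1 * (deriv f2 x1 / (f2 x1)\<^sup>2) * (c1 / 2 * x2\<^sup>2 + c2 * x2 + c3)
                         + (c1 * F0 x1 + c4) / f2 x1 \<and>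
           V3 x1 x2 x3 = c3"
    using assms(5) unfolding exponential_family_def by blast
  have "f2 = (\<lambda>x. a1 * exp (a2 * x))"
    using f2_eq by auto
  then have f2': "(f2 has_real_derivative a2 * f2 x) (at x)" for x
    by (auto intro!: derivative_eq_intros)
  then have f2: "(f2 has_real_derivative deriv f2 x) (at x)" for x
    by (metis DERIV_imp_deriv)
  have "log_deriv f2 = (\<lambda>_. a2)"
    using f2_nz by (simp add: fun_eq_iff log_deriv_def DERIV_imp_deriv[OF f2'])
  then have h: "(log_deriv f2 has_real_derivative 0 * (f2 x)\<^sup>2 / k1\<^sup>2) (at x)" for x
    by simp
  show ?thesis
    by (rule is_killing_separable_family[OF k1 k3 f2 f2_nz h F0,
          where P = "\<lambda>x2. c1 / 2 * x2\<^sup>2 + c2 * x2 + c3" and \<alpha> = "\<lambda>x2. c1 * x2 + c2" and m = c1])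
      (auto intro!: derivative_eq_intros simp: V)
qed

lemma is_killing_trigonometric_family:
  assumes k1: "k1 \<noteq> 0" and k3: "k3 \<noteq> 0" and f2_smooth: "smooth1 f2" and f2_nz: "\<And>x. f2 x \<noteq> 0"
    and F0: "\<And>x. (F0 has_real_derivative - (f2 x)\<^sup>2 / k1) (at x)"
    and "trigonometric_family k1 f2 F0 V1 V2 V3"
  shows "is_killing (frame_metric k1 f2 k3) (frame_field k1 f2 k3 V1 V2 V3)"
proof -
  obtain k c1 c2 c3 c4 where "0 < k" and k_eq: "\<forall>x. k1\<^sup>2 / (f2 x)\<^sup>2 * deriv (log_deriv f2) x = k"
    and V: "\<forall>x1 x2 x3.
           V1 x1 x2 x3 = c1 * cos (sqrt k * x2) + c2 * sin (sqrt k * x2) \<and>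
           V2 x1 x2 x3 = k1 * (deriv f2 x1 / (f2 x1)\<^sup>2) *
                           (1 / sqrt k * (c1 * sin (sqrt k * x2) - c2 * cos (sqrt k * x2)) + c3)
                         + (c3 * k * F0 x1 + c4) / f2 x1 \<and>
           V3 x1 x2 x3 = c3"
    using assms(6) unfolding trigonometric_family_def by blast
  define s where "s = sqrt k"
  have "s > 0" "k = s\<^sup>2"
    using \<open>0 < k\<close> by (auto simp: s_def)
  show ?thesis
    by (rule is_killing_separable_family[OF k1 k3 smooth1_has_derivatives(1)[OF f2_smooth] f2_nz
          log_deriv_has_derivative_if_const[OF f2_smooth f2_nz k1 k_eq] F0,
          where P = "\<lambda>x2. 1 / s * (c1 * sin (s * x2) - c2 * cos (s * x2)) + c3"
            and \<alpha> = "\<lambda>x2. c1 * cos (s * x2) + c2 * sin (s * x2)" and m = "c3 * k"])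
      (use \<open>s > 0\<close> \<open>k = s\<^sup>2\<close> in
        \<open>auto intro!: derivative_eq_intros simp: V s_def[symmetric] field_simps power2_eq_square\<close>)
qed

lemma is_killing_hyperbolic_family:
  assumes k1: "k1 \<noteq> 0" and k3: "k3 \<noteq> 0" and f2_smooth: "smooth1 f2" and f2_nz: "\<And>x. f2 x \<noteq> 0"
    and F0: "\<And>x. (F0 has_real_derivative - (f2 x)\<^sup>2 / k1) (at x)"
    and "hyperbolic_family k1 f2 F0 V1 V2 V3"
  shows "is_killing (frame_metric k1 f2 k3) (frame_field k1 f2 k3 V1 V2 V3)"
proof -
  obtain k c1 c2 c3 c4 where "k < 0" and k_eq: "\<forall>x. k1\<^sup>2 / (f2 x)\<^sup>2 * deriv (log_deriv f2) x = k"
    and V: "\<forall>x1 x2 x3.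
           V1 x1 x2 x3 = c1 * exp (sqrt (- k) * x2) + c2 * exp (- sqrt (- k) * x2) \<and>
           V2 x1 x2 x3 = k1 * (deriv f2 x1 / (f2 x1)\<^sup>2) *
                           (1 / sqrt (- k) * (c1 * exp (sqrt (- k) * x2) - c2 * exp (- sqrt (- k) * x2)) + c3)
                         + (c3 * k * F0 x1 + c4) / f2 x1 \<and>
           V3 x1 x2 x3 = c3"
    using assms(6) unfolding hyperbolic_family_def by blast
  define s where "s = sqrt (- k)"
  have "s > 0" "k = - s\<^sup>2"
    using \<open>k < 0\<close> by (auto simp: s_def)
  show ?thesis
    by (rule is_killing_separable_family[OF k1 k3 smooth1_has_derivatives(1)[OF f2_smooth] f2_nz
          log_deriv_has_derivative_if_const[OF f2_smooth f2_nz k1 k_eq] F0,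
          where P = "\<lambda>x2. 1 / s * (c1 * exp (s * x2) - c2 * exp (- s * x2)) + c3"
            and \<alpha> = "\<lambda>x2. c1 * exp (s * x2) + c2 * exp (- s * x2)" and m = "c3 * k"])
      (use \<open>s > 0\<close> \<open>k = - s\<^sup>2\<close> in
        \<open>auto intro!: derivative_eq_intros simp: V s_def[symmetric] field_simps power2_eq_square\<close>)
qed

subsection \<open>Every Killing field belongs to one of the families\<close>

locale killing_frame =
  fixes k1 k3 :: real and f2 F0 :: "real \<Rightarrow> real" and V1 V2 V3 :: scalar_field
  assumes k1_nz: "k1 \<noteq> 0" and k3_nz: "k3 \<noteq> 0"
    and f2_smooth: "smooth1 f2" and f2_nz: "f2 x \<noteq> 0"
    and F0: "(F0 has_real_derivative - (f2 x)\<^sup>2 / k1) (at x)"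
    and V1_smooth: "smooth3 V1" and V2_smooth: "smooth3 V2" and V3_smooth: "smooth3 V3"
    and killing: "is_killing (frame_metric k1 f2 k3) (frame_field k1 f2 k3 V1 V2 V3)"
begin

lemma f2_deriv: "(f2 has_real_derivative deriv f2 x) (at x)"
  using smooth1_has_derivatives(1)[OF f2_smooth] .

lemmas V1_partials = smooth3_has_partials[OF V1_smooth]
  and V2_partials = smooth3_has_partials[OF V2_smooth]
  and V3_partials = smooth3_has_partials[OF V3_smooth]

lemma killing_equations:
  shows eq11: "pd 1 V1 x1 x2 x3 = 0"
    and eq33: "pd 3 V3 x1 x2 x3 = 0"
    and eq22: "pd 2 V2 x1 x2 x3 = k1 * V1 x1 x2 x3 * deriv f2 x1 / (f2 x1)\<^sup>2"
    and eq12: "deriv f2 x1 * V2 x1 x2 x3 + f2 x1 * pd 1 V2 x1 x2 x3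
                 + (f2 x1)\<^sup>2 * pd 2 V1 x1 x2 x3 / k1 = 0"
    and eq13: "pd 3 V1 x1 x2 x3 = - (k1 / k3) * pd 1 V3 x1 x2 x3"
    and eq23: "pd 3 V2 x1 x2 x3 = - (f2 x1 / k3) * pd 2 V3 x1 x2 x3"
proof -
  have "\<forall>x1 x2 x3. pd 1 V1 x1 x2 x3 = 0 \<and> pd 3 V3 x1 x2 x3 = 0
       \<and> pd 2 V2 x1 x2 x3 = k1 * V1 x1 x2 x3 * deriv f2 x1 / (f2 x1)\<^sup>2
       \<and> (deriv f2 x1 * V2 x1 x2 x3 + pd 1 V2 x1 x2 x3 * f2 x1) / (f2 x1)\<^sup>2
           + pd 2 V1 x1 x2 x3 / k1 = 0
       \<and> pd 1 V3 x1 x2 x3 / k3 + pd 3 V1 x1 x2 x3 / k1 = 0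
       \<and> pd 2 V3 x1 x2 x3 / k3 + pd 3 V2 x1 x2 x3 / f2 x1 = 0"
    using is_killing_frame_iff[OF k1_nz k3_nz f2_deriv f2_nz V1_partials
        DERIV_mult[OF f2_deriv V2_partials(1)] V2_partials(2,3) V3_partials] killing
    by blast
  note eqs = this[rule_format, of x1 x2 x3]
  show "pd 1 V1 x1 x2 x3 = 0" "pd 3 V3 x1 x2 x3 = 0"
    "pd 2 V2 x1 x2 x3 = k1 * V1 x1 x2 x3 * deriv f2 x1 / (f2 x1)\<^sup>2"
    using eqs by simp_all
  show "deriv f2 x1 * V2 x1 x2 x3 + f2 x1 * pd 1 V2 x1 x2 x3 + (f2 x1)\<^sup>2 * pd 2 V1 x1 x2 x3 / k1 = 0"
    "pd 3 V1 x1 x2 x3 = - (k1 / k3) * pd 1 V3 x1 x2 x3"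
    "pd 3 V2 x1 x2 x3 = - (f2 x1 / k3) * pd 2 V3 x1 x2 x3"
    using eqs k1_nz k3_nz f2_nz[of x1] by (simp_all add: field_simps)
qed

definition \<sigma> :: "real \<Rightarrow> real" where "\<sigma> x2 = pd 3 V1 0 x2 0"
definition \<alpha> :: "real \<Rightarrow> real" where "\<alpha> x2 = V1 0 x2 0"
definition \<beta> :: "real \<Rightarrow> real" where "\<beta> x2 = V3 0 x2 0"

lemma \<sigma>_deriv: "(\<sigma> has_real_derivative deriv \<sigma> x) (at x)"
  using smooth3_has_partials(2)[OF smooth3_pd[OF V1_smooth, of 3]]
  by (simp add: \<sigma>_def[abs_def] pd_def)

lemma \<alpha>_deriv: "(\<alpha> has_real_derivative deriv \<alpha> x) (at x)"
  and \<alpha>_deriv2: "(deriv \<alpha> has_real_derivative deriv (deriv \<alpha>) x) (at x)"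
proof -
  have "deriv \<alpha> = (\<lambda>x. pd 2 V1 0 x 0)"
    by (simp add: \<alpha>_def[abs_def] pd_def)
  then show "(\<alpha> has_real_derivative deriv \<alpha> x) (at x)"
    and "(deriv \<alpha> has_real_derivative deriv (deriv \<alpha>) x) (at x)"
    using V1_partials(2) smooth3_has_partials(2)[OF smooth3_pd[OF V1_smooth, of 2]]
    by (simp_all add: \<alpha>_def[abs_def] pd_def)
qed

lemma \<beta>_deriv: "(\<beta> has_real_derivative deriv \<beta> x) (at x)"
  using V3_partials(2) by (simp add: \<beta>_def[abs_def] pd_def)

lemma V1_indep_x1: "V1 x1 x2 x3 = V1 0 x2 x3"
  using DERIV_isconst_all[of "\<lambda>t. V1 t x2 x3" x1 0] V1_partials(1) eq11 by metis

lemma V3_indep_x3: "V3 x1 x2 x3 = V3 x1 x2 0"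
  using DERIV_isconst_all[of "\<lambda>t. V3 x1 x2 t" x3 0] V3_partials(3) eq33 by metis

lemma pd3_V1_eq: "pd 3 V1 x1 x2 x3 = \<sigma> x2"
proof -
  have "pd 3 V1 x1 x2 x3 = pd 3 V1 0 x2 x3"
    by (rule pd3_eqI, rule V1_indep_x1, rule V1_partials(3))
  also have "\<dots> = - (k1 / k3) * pd 1 V3 0 x2 x3"
    by (rule eq13)
  also have "\<dots> = - (k1 / k3) * pd 1 V3 0 x2 0"
    using pd1_eqI[of V3 x2 x3 "\<lambda>t. V3 t x2 0"] V3_indep_x3 V3_partials(1) by simp
  also have "\<dots> = \<sigma> x2"
    using eq13[of 0 x2 0] by (simp add: \<sigma>_def)
  finally show ?thesis .
qed

lemma V1_eq: "V1 x1 x2 x3 = \<sigma> x2 * x3 + \<alpha> x2"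
  using DERIV_const_imp_affine[of "\<lambda>t. V1 0 x2 t" "\<sigma> x2" x3] V1_partials(3)[of 0 x2]
    pd3_V1_eq V1_indep_x1[of x1 x2 x3]
  by (simp add: \<alpha>_def)

lemma V3_eq: "V3 x1 x2 x3 = - (k3 / k1) * \<sigma> x2 * x1 + \<beta> x2"
proof -
  have "pd 1 V3 x1 x2 0 = - (k3 / k1) * \<sigma> x2" for x1
    using eq13[of x1 x2 0] pd3_V1_eq[of x1 x2 0] k1_nz k3_nz by (simp add: field_simps)
  then show ?thesis
    using DERIV_const_imp_affine[of "\<lambda>t. V3 t x2 0" "- (k3 / k1) * \<sigma> x2" x1] V3_partials(1)[of x2 0]
      V3_indep_x3[of x1 x2 x3]
    by (simp add: \<beta>_def)
qed

lemma pd2_V1_eq: "pd 2 V1 x1 x2 x3 = deriv \<sigma> x2 * x3 + deriv \<alpha> x2"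
  by (rule pd2_eqI, rule V1_eq) (auto intro!: derivative_eq_intros \<sigma>_deriv \<alpha>_deriv)

lemma pd2_V3_eq: "pd 2 V3 x1 x2 x3 = - (k3 / k1) * deriv \<sigma> x2 * x1 + deriv \<beta> x2"
  by (rule pd2_eqI, rule V3_eq) (use k1_nz in \<open>auto intro!: derivative_eq_intros \<sigma>_deriv \<beta>_deriv\<close>)

lemma V2_eq: "V2 x1 x2 x3 = f2 x1 * (deriv \<sigma> x2 * x1 / k1 - deriv \<beta> x2 / k3) * x3 + V2 x1 x2 0"
proof -
  have "pd 3 V2 x1 x2 x3 = f2 x1 * (deriv \<sigma> x2 * x1 / k1 - deriv \<beta> x2 / k3)" for x3
    using eq23[of x1 x2 x3] pd2_V3_eq[of x1 x2 x3] k1_nz k3_nz by (simp add: field_simps)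
  then show ?thesis
    using DERIV_const_imp_affine[of "\<lambda>t. V2 x1 x2 t"] V2_partials(3)[of x1 x2] by simp
qed

text \<open>The coefficient of x3 in the (1,2) Killing equation.\<close>
lemma slope_equation:
  "deriv f2 x1 * (deriv \<sigma> x2 * x1 / k1 - deriv \<beta> x2 / k3) + f2 x1 * deriv \<sigma> x2 / k1 = 0"
    (is "?Q' = 0")
proof -
  have pd1_V2: "pd 1 V2 x1 x2 x3 = ?Q' * x3 + pd 1 V2 x1 x2 0" for x3
    by (rule pd1_eqI, rule V2_eq)
      (use k1_nz k3_nz in \<open>auto intro!: derivative_eq_intros f2_deriv V2_partials(1) simp: field_simps\<close>)
  have "deriv f2 x1 * V2 x1 x2 x3 + f2 x1 * pd 1 V2 x1 x2 x3 + (f2 x1)\<^sup>2 * pd 2 V1 x1 x2 x3 / k1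
      = 2 * f2 x1 * ?Q' * x3 + (deriv f2 x1 * V2 x1 x2 0 + f2 x1 * pd 1 V2 x1 x2 0
        + (f2 x1)\<^sup>2 * deriv \<alpha> x2 / k1)" for x3
    using k1_nz k3_nz unfolding V2_eq[of x1 x2 x3] pd1_V2[of x3] pd2_V1_eq
    by (simp add: field_simps power2_eq_square)
  then have "2 * f2 x1 * ?Q' * x3 + (deriv f2 x1 * V2 x1 x2 0 + f2 x1 * pd 1 V2 x1 x2 0
      + (f2 x1)\<^sup>2 * deriv \<alpha> x2 / k1) = 0" for x3
    using eq12[of x1 x2 x3] by simp
  from this[of 1] this[of 0] show ?thesis
    using f2_nz[of x1] by simp
qed

lemma deriv_\<sigma>_zero: "deriv \<sigma> x2 = 0"
proof (rule ccontr)
  assume "deriv \<sigma> x2 \<noteq> 0"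
  define x1 where "x1 = k1 * deriv \<beta> x2 / (k3 * deriv \<sigma> x2)"
  have "deriv \<sigma> x2 * x1 / k1 - deriv \<beta> x2 / k3 = 0"
    using \<open>deriv \<sigma> x2 \<noteq> 0\<close> k1_nz k3_nz by (simp add: x1_def field_simps)
  then show False
    using slope_equation[of x1 x2] \<open>deriv \<sigma> x2 \<noteq> 0\<close> k1_nz f2_nz[of x1] by simp
qed

lemma \<sigma>_const: "\<sigma> x = \<sigma> 0"
  using DERIV_isconst_all[of \<sigma>] \<sigma>_deriv deriv_\<sigma>_zero by metis

lemma deriv_f2_deriv_\<beta>: "deriv f2 x1 * deriv \<beta> x2 = 0"
  using slope_equation[of x1 x2] k3_nz by (simp add: deriv_\<sigma>_zero)

end

locale killing_frame_const = killing_frame +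
  fixes k2 :: real
  assumes f2_eq: "f2 x = k2"
begin

lemma k2_nz: "k2 \<noteq> 0"
  using f2_nz f2_eq by metis

lemma deriv_f2_zero: "deriv f2 x = 0"
proof -
  have "f2 = (\<lambda>_. k2)"
    using f2_eq by (rule ext)
  then show ?thesis
    by simp
qed

lemma V2_indep_x2: "V2 x1 x2 x3 = V2 x1 0 x3"
  using DERIV_isconst_all[of "\<lambda>t. V2 x1 t x3" x2 0] V2_partials(2) eq22 deriv_f2_zero by simp

lemma deriv_\<beta>_const: "deriv \<beta> x2 = deriv \<beta> 0"
proof -
  have \<beta>_slope: "- k2 * deriv \<beta> x2 / k3 = V2 0 0 1 - V2 0 0 0" for x2
    using V2_eq[of 0 x2 1] V2_indep_x2[of 0 x2 1] V2_indep_x2[of 0 x2 0]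
    by (simp add: deriv_\<sigma>_zero f2_eq)
  show ?thesis
    using \<beta>_slope[of x2] \<beta>_slope[of 0] k2_nz k3_nz by (simp add: field_simps)
qed

lemma pd1_V2_eq: "pd 1 V2 x1 x2 x3 = - (k2 / k1) * deriv \<alpha> x2"
proof -
  have "k2 * (k1 * pd 1 V2 x1 x2 x3 + k2 * deriv \<alpha> x2) = 0"
    using eq12[of x1 x2 x3] pd2_V1_eq[of x1 x2 x3] k1_nz
    by (simp add: deriv_f2_zero f2_eq deriv_\<sigma>_zero field_simps power2_eq_square)
  with k2_nz have "k1 * pd 1 V2 x1 x2 x3 = - (k2 * deriv \<alpha> x2)"
    by simp
  with k1_nz show ?thesis
    by (simp add: field_simps)
qed

lemma deriv_\<alpha>_const: "deriv \<alpha> x2 = deriv \<alpha> 0"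
proof -
  have "pd 1 V2 0 x2 0 = pd 1 V2 0 0 0"
    by (rule pd1_eqI, rule V2_indep_x2, rule V2_partials(1))
  then show ?thesis
    using pd1_V2_eq[of 0 x2 0] pd1_V2_eq[of 0 0 0] k2_nz k1_nz by simp
qed

lemma in_flat_family: "flat_family k1 k3 f2 V1 V2 V3"
proof -
  have \<alpha>_eq: "\<alpha> x2 = deriv \<alpha> 0 * x2 + \<alpha> 0" for x2
    using DERIV_const_imp_affine \<alpha>_deriv deriv_\<alpha>_const by metis
  have \<beta>_eq: "\<beta> x2 = deriv \<beta> 0 * x2 + \<beta> 0" for x2
    using DERIV_const_imp_affine \<beta>_deriv deriv_\<beta>_const by metis
  have V2_x1: "V2 x1 0 0 = - (k2 / k1) * deriv \<alpha> 0 * x1 + V2 0 0 0" for x1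
    using DERIV_const_imp_affine[of "\<lambda>t. V2 t 0 0" "- (k2 / k1) * deriv \<alpha> 0" x1]
      V2_partials(1)[of 0 0] pd1_V2_eq[of _ 0 0]
    by simp
  show ?thesis
    unfolding flat_family_def
  proof (intro exI conjI allI)
    fix x1 x2 x3
    show "f2 x1 = k2"
      by (rule f2_eq)
    show "V1 x1 x2 x3 = deriv \<alpha> 0 * x2 + \<sigma> 0 * x3 + \<alpha> 0"
      using V1_eq[of x1 x2 x3] \<alpha>_eq[of x2] \<sigma>_const[of x2] by simp
    show "V2 x1 x2 x3 = - (deriv \<alpha> 0 * k2 / k1) * x1 - deriv \<beta> 0 / k3 * k2 * x3 + V2 0 0 0"
      using V2_eq[of x1 x2 x3] V2_indep_x2[of x1 x2 0] V2_x1[of x1] deriv_\<beta>_const[of x2]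
      by (simp add: deriv_\<sigma>_zero f2_eq algebra_simps)
    show "V3 x1 x2 x3 = - (\<sigma> 0 * k3 / k1) * x1 + deriv \<beta> 0 / k3 * k3 * x2 + \<beta> 0"
      using V3_eq[of x1 x2 x3] \<beta>_eq[of x2] \<sigma>_const[of x2] k3_nz by simp
  qed
qed

end

locale killing_frame_nonconst = killing_frame +
  fixes x0 :: real
  assumes deriv_f2_x0: "deriv f2 x0 \<noteq> 0"
begin

lemma deriv_\<beta>_zero: "deriv \<beta> x = 0"
  using deriv_f2_deriv_\<beta>[of x0 x] deriv_f2_x0 by simp

lemma V2_indep_x3: "V2 x1 x2 x3 = V2 x1 x2 0"
  using V2_eq[of x1 x2 x3] by (simp add: deriv_\<sigma>_zero deriv_\<beta>_zero)

lemma \<sigma>_zero: "\<sigma> x2 = 0"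
proof -
  have "pd 2 V2 x0 x2 1 = pd 2 V2 x0 x2 0"
    by (rule pd2_eqI, rule V2_indep_x3, rule V2_partials(2))
  then have "V1 x0 x2 1 = V1 x0 x2 0"
    using eq22[of x0 x2 1] eq22[of x0 x2 0] deriv_f2_x0 k1_nz f2_nz[of x0] by simp
  then show ?thesis
    using V1_eq[of x0 x2 1] V1_eq[of x0 x2 0] by simp
qed

lemma V1_eq_\<alpha>: "V1 x1 x2 x3 = \<alpha> x2"
  using V1_eq by (simp add: \<sigma>_zero)

lemma V3_eq_const: "V3 x1 x2 x3 = \<beta> 0"
  using V3_eq[of x1 x2 x3] DERIV_isconst_all[of \<beta> x2 0] \<beta>_deriv deriv_\<beta>_zero
  by (simp add: \<sigma>_zero)

definition U :: "real \<Rightarrow> real \<Rightarrow> real" where "U x1 x2 = f2 x1 * V2 x1 x2 0"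

lemma V2_eq_U: "V2 x1 x2 x3 = U x1 x2 / f2 x1"
  using V2_indep_x3 f2_nz by (simp add: U_def)

lemma U_partial2: "((\<lambda>t. U x1 t) has_real_derivative k1 * log_deriv f2 x1 * \<alpha> x2) (at x2)"
proof -
  have "((\<lambda>t. U x1 t) has_real_derivative f2 x1 * pd 2 V2 x1 x2 0) (at x2)"
    unfolding U_def by (intro DERIV_cmult V2_partials(2))
  moreover have "f2 x1 * pd 2 V2 x1 x2 0 = k1 * log_deriv f2 x1 * \<alpha> x2"
    using eq22[of x1 x2 0] f2_nz[of x1] by (simp add: V1_eq_\<alpha> log_deriv_def power2_eq_square)
  ultimately show ?thesis
    by simp
qed

lemma U_partial1: "((\<lambda>t. U t x2) has_real_derivative - (f2 x1)\<^sup>2 / k1 * deriv \<alpha> x2) (at x1)"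
proof -
  have "((\<lambda>t. U t x2) has_real_derivative deriv f2 x1 * V2 x1 x2 0 + pd 1 V2 x1 x2 0 * f2 x1) (at x1)"
    unfolding U_def by (rule DERIV_mult[OF f2_deriv V2_partials(1)])
  moreover have "deriv f2 x1 * V2 x1 x2 0 + pd 1 V2 x1 x2 0 * f2 x1 = - (f2 x1)\<^sup>2 / k1 * deriv \<alpha> x2"
    using eq12[of x1 x2 0] pd2_V1_eq[of x1 x2 0] by (simp add: deriv_\<sigma>_zero algebra_simps)
  ultimately show ?thesis
    by simp
qed

lemma log_deriv_f2: "(log_deriv f2 has_real_derivative deriv (log_deriv f2) x) (at x)"
  by (rule log_deriv_has_derivative[OF f2_smooth f2_nz])

lemma U_integrability:
  "k1\<^sup>2 * deriv (log_deriv f2) x1 * \<alpha> x2 = - (f2 x1)\<^sup>2 * deriv (deriv \<alpha>) x2"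
proof -
  have "k1 * deriv (log_deriv f2) x1 * \<alpha> x2 = - (f2 x1)\<^sup>2 / k1 * deriv (deriv \<alpha>) x2"
    by (rule separable_mixed_partials[where p = "\<lambda>x. k1 * log_deriv f2 x" and q = \<alpha>
          and r = "\<lambda>x. - (f2 x)\<^sup>2 / k1" and s = "deriv \<alpha>", OF U_partial2 U_partial1
          DERIV_cmult[OF log_deriv_f2] \<alpha>_deriv2])
  with k1_nz show ?thesis
    by (simp add: field_simps power2_eq_square)
qed

lemma translation_family_if_\<alpha>_zero:
  assumes "\<And>x. \<alpha> x = 0"
  shows "translation_family f2 V1 V2 V3"
proof -
  have "\<alpha> = (\<lambda>_. 0)"
    using assms by auto
  then have "U x1 x2 = U 0 0" for x1 x2
    using eq_plus_const_if_same_partials[where G = "\<lambda>_ _. 0" and D = "\<lambda>_ _. 0" and E = "\<lambda>_ _. 0"]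
      U_partial1 U_partial2 by simp
  then show ?thesis
    unfolding translation_family_def using assms V1_eq_\<alpha> V2_eq_U V3_eq_const by auto
qed

lemma separation_constant:
  assumes "\<alpha> y0 \<noteq> 0"
  obtains k where "\<And>x. deriv (log_deriv f2) x = k * (f2 x)\<^sup>2 / k1\<^sup>2"
    and "\<And>x. deriv (deriv \<alpha>) x = - k * \<alpha> x"
proof -
  define k where "k = - deriv (deriv \<alpha>) y0 / \<alpha> y0"
  have h': "deriv (log_deriv f2) x = k * (f2 x)\<^sup>2 / k1\<^sup>2" for x
  proof -
    have "k1\<^sup>2 * deriv (log_deriv f2) x * \<alpha> y0 = k * (f2 x)\<^sup>2 * \<alpha> y0"
      using U_integrability[of x y0] assms by (simp add: k_def)
    with assms k1_nz show ?thesis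
      by (simp add: field_simps)
  qed
  have "(f2 0)\<^sup>2 * (deriv (deriv \<alpha>) x + k * \<alpha> x) = 0" for x
    using U_integrability[of 0 x] k1_nz by (simp add: h' algebra_simps)
  then have "deriv (deriv \<alpha>) x = - k * \<alpha> x" for x
    using f2_nz[of 0] by (simp add: add_eq_0_iff)
  with h' show ?thesis
    by (rule that)
qed

text \<open>f2 V2 is determined up to a constant by its two partial derivatives.\<close>
lemma V2_separable:
  assumes h': "\<And>x. deriv (log_deriv f2) x = k * (f2 x)\<^sup>2 / k1\<^sup>2"
    and P: "\<And>x. (P has_real_derivative \<alpha> x) (at x)"
    and \<alpha>': "\<And>x. deriv \<alpha> x = m - k * P x"
  obtains c where "\<And>x1 x2 x3. V2 x1 x2 x3 = k1 * (deriv f2 x1 / (f2 x1)\<^sup>2) * P x2 + (m * F0 x1 + c) / f2 x1"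
proof -
  let ?G = "\<lambda>x1 x2. k1 * P x2 * log_deriv f2 x1 + m * F0 x1"
  have "U x1 x2 = ?G x1 x2 + (U 0 0 - ?G 0 0)" for x1 x2
  proof (rule eq_plus_const_if_same_partials[where U = U and G = ?G
        and D = "\<lambda>x1 x2. - (f2 x1)\<^sup>2 / k1 * deriv \<alpha> x2"
        and E = "\<lambda>x1 x2. k1 * log_deriv f2 x1 * \<alpha> x2"])
    show "((\<lambda>t. ?G t x2) has_real_derivative - (f2 x1)\<^sup>2 / k1 * deriv \<alpha> x2) (at x1)" for x1 x2
    proof -
      have "((\<lambda>t. ?G t x2) has_real_derivative
          k1 * P x2 * deriv (log_deriv f2) x1 + m * (- (f2 x1)\<^sup>2 / k1)) (at x1)"
        by (intro DERIV_add DERIV_cmult log_deriv_f2 F0)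
      moreover have "k1 * P x2 * deriv (log_deriv f2) x1 + m * (- (f2 x1)\<^sup>2 / k1)
          = - (f2 x1)\<^sup>2 / k1 * deriv \<alpha> x2"
        using k1_nz by (simp add: h' \<alpha>' field_simps power2_eq_square)
      ultimately show ?thesis
        by simp
    qed
    show "((\<lambda>t. ?G x1 t) has_real_derivative k1 * log_deriv f2 x1 * \<alpha> x2) (at x2)" for x1 x2
      by (auto intro!: derivative_eq_intros P)
  qed (fact U_partial1 U_partial2)+
  then show ?thesis
    using f2_nz by (intro that[of "U 0 0 - ?G 0 0"])
      (simp add: V2_eq_U log_deriv_def field_simps power2_eq_square)
qed

lemma exponential_family_if_k_zero:
  assumes h': "\<And>x. deriv (log_deriv f2) x = 0" and \<alpha>'': "\<And>x. deriv (deriv \<alpha>) x = 0"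
  shows "exponential_family k1 f2 F0 V1 V2 V3"
proof -
  define a2 where "a2 = log_deriv f2 x0"
  have log_deriv_const: "log_deriv f2 x = a2" for x
    using DERIV_isconst_all[of "log_deriv f2" x x0] log_deriv_f2 h' by (simp add: a2_def)
  have "deriv f2 x = a2 * f2 x" for x
    using log_deriv_const[of x] f2_nz[of x] by (simp add: log_deriv_def field_simps)
  then have f2_eq: "f2 x = f2 0 * exp (a2 * x)" for x
    using DERIV_proportional_imp_exp f2_deriv by metis
  have "a2 \<noteq> 0"
    using deriv_f2_x0 f2_nz[of x0] by (simp add: a2_def log_deriv_def)
  define c1 c2 where "c1 = deriv \<alpha> 0" and "c2 = \<alpha> 0"
  have \<alpha>': "deriv \<alpha> x = c1" for x
    using DERIV_isconst_all[of "deriv \<alpha>" x 0] \<alpha>_deriv2 \<alpha>'' by (simp add: c1_def)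
  then have \<alpha>_eq: "\<alpha> x = c1 * x + c2" for x
    using DERIV_const_imp_affine \<alpha>_deriv c2_def by metis
  define P where "P x2 = c1 / 2 * x2\<^sup>2 + c2 * x2 + \<beta> 0" for x2
  have "(P has_real_derivative \<alpha> x) (at x)" for x
    unfolding P_def by (auto intro!: derivative_eq_intros simp: \<alpha>_eq)
  moreover have "deriv (log_deriv f2) x = 0 * (f2 x)\<^sup>2 / k1\<^sup>2" and "deriv \<alpha> x = c1 - 0 * P x" for x
    by (simp_all add: h' \<alpha>')
  ultimately obtain c where V2: "\<And>x1 x2 x3. V2 x1 x2 x3 =
      k1 * (deriv f2 x1 / (f2 x1)\<^sup>2) * P x2 + (c1 * F0 x1 + c) / f2 x1"
    using V2_separable by blast
  show ?thesis
    unfolding exponential_family_def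
  proof (intro exI conjI allI)
    show "f2 0 \<noteq> 0"
      by (rule f2_nz)
    show "a2 \<noteq> 0"
      by fact
    show "f2 x = f2 0 * exp (a2 * x)" for x
      by (rule f2_eq)
    fix x1 x2 x3
    show "V1 x1 x2 x3 = c1 * x2 + c2"
      by (simp add: V1_eq_\<alpha> \<alpha>_eq)
    show "V2 x1 x2 x3 = k1 * (deriv f2 x1 / (f2 x1)\<^sup>2) * (c1 / 2 * x2\<^sup>2 + c2 * x2 + \<beta> 0)
        + (c1 * F0 x1 + c) / f2 x1"
      by (simp add: V2 P_def)
    show "V3 x1 x2 x3 = \<beta> 0"
      by (rule V3_eq_const)
  qed
qed

lemma trigonometric_family_if_k_pos:
  assumes "0 < k" and h': "\<And>x. deriv (log_deriv f2) x = k * (f2 x)\<^sup>2 / k1\<^sup>2"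
    and \<alpha>'': "\<And>x. deriv (deriv \<alpha>) x = - k * \<alpha> x"
  shows "trigonometric_family k1 f2 F0 V1 V2 V3"
proof -
  define s where "s = sqrt k"
  have "s > 0" and k: "k = s\<^sup>2"
    using \<open>0 < k\<close> by (auto simp: s_def)
  define c1 c2 where "c1 = \<alpha> 0" and "c2 = deriv \<alpha> 0 / s"
  have "(deriv \<alpha> has_real_derivative - s\<^sup>2 * \<alpha> x) (at x)" for x
    using \<alpha>_deriv2[of x] by (simp add: \<alpha>'' k)
  then have "\<alpha> x = c1 * cos (s * x) + c2 * sin (s * x)" for x
    unfolding c1_def c2_def using \<open>s > 0\<close> \<alpha>_deriv by (intro harmonic_ode_solution) auto
  then have \<alpha>_eq: "\<alpha> = (\<lambda>x. c1 * cos (s * x) + c2 * sin (s * x))"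
    by (rule ext)
  define P where "P x2 = 1 / s * (c1 * sin (s * x2) - c2 * cos (s * x2)) + \<beta> 0" for x2
  have P: "(P has_real_derivative \<alpha> x) (at x)" for x
    unfolding P_def \<alpha>_eq using \<open>s > 0\<close> by (auto intro!: derivative_eq_intros simp: field_simps)
  have "(\<alpha> has_real_derivative k * \<beta> 0 - k * P x) (at x)" for x
    unfolding P_def \<alpha>_eq k using \<open>s > 0\<close>
    by (auto intro!: derivative_eq_intros simp: field_simps power2_eq_square)
  then have "deriv \<alpha> x = k * \<beta> 0 - k * P x" for x
    by (rule DERIV_imp_deriv)
  then obtain c where V2: "\<And>x1 x2 x3. V2 x1 x2 x3 =
      k1 * (deriv f2 x1 / (f2 x1)\<^sup>2) * P x2 + (k * \<beta> 0 * F0 x1 + c) / f2 x1"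
    using V2_separable[OF h' P] by blast
  show ?thesis
    unfolding trigonometric_family_def
  proof (intro exI conjI allI)
    show "0 < k"
      by fact
    show "k1\<^sup>2 / (f2 x)\<^sup>2 * deriv (log_deriv f2) x = k" for x
      using h' k1_nz f2_nz[of x] by simp
    fix x1 x2 x3
    show "V1 x1 x2 x3 = c1 * cos (sqrt k * x2) + c2 * sin (sqrt k * x2)"
      by (simp add: V1_eq_\<alpha> \<alpha>_eq s_def)
    show "V2 x1 x2 x3 = k1 * (deriv f2 x1 / (f2 x1)\<^sup>2) *
        (1 / sqrt k * (c1 * sin (sqrt k * x2) - c2 * cos (sqrt k * x2)) + \<beta> 0)
        + (\<beta> 0 * k * F0 x1 + c) / f2 x1"
      by (simp add: V2 P_def s_def mult.commute)
    show "V3 x1 x2 x3 = \<beta> 0"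
      by (rule V3_eq_const)
  qed
qed

lemma hyperbolic_family_if_k_neg:
  assumes "k < 0" and h': "\<And>x. deriv (log_deriv f2) x = k * (f2 x)\<^sup>2 / k1\<^sup>2"
    and \<alpha>'': "\<And>x. deriv (deriv \<alpha>) x = - k * \<alpha> x"
  shows "hyperbolic_family k1 f2 F0 V1 V2 V3"
proof -
  define s where "s = sqrt (- k)"
  have "s > 0" and k: "k = - s\<^sup>2"
    using \<open>k < 0\<close> by (auto simp: s_def)
  define c1 c2 where "c1 = (\<alpha> 0 + deriv \<alpha> 0 / s) / 2" and "c2 = (\<alpha> 0 - deriv \<alpha> 0 / s) / 2"
  have "(deriv \<alpha> has_real_derivative s\<^sup>2 * \<alpha> x) (at x)" for x
    using \<alpha>_deriv2[of x] by (simp add: \<alpha>'' k)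
  then have "\<alpha> x = c1 * exp (s * x) + c2 * exp (- s * x)" for x
    unfolding c1_def c2_def using \<open>s > 0\<close> \<alpha>_deriv by (intro hyperbolic_ode_solution) auto
  then have \<alpha>_eq: "\<alpha> = (\<lambda>x. c1 * exp (s * x) + c2 * exp (- s * x))"
    by (rule ext)
  define P where "P x2 = 1 / s * (c1 * exp (s * x2) - c2 * exp (- s * x2)) + \<beta> 0" for x2
  have P: "(P has_real_derivative \<alpha> x) (at x)" for x
    unfolding P_def \<alpha>_eq using \<open>s > 0\<close> by (auto intro!: derivative_eq_intros simp: field_simps)
  have "(\<alpha> has_real_derivative k * \<beta> 0 - k * P x) (at x)" for x
    unfolding P_def \<alpha>_eq k using \<open>s > 0\<close>
    by (auto intro!: derivative_eq_intros simp: field_simps power2_eq_square)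
  then have "deriv \<alpha> x = k * \<beta> 0 - k * P x" for x
    by (rule DERIV_imp_deriv)
  then obtain c where V2: "\<And>x1 x2 x3. V2 x1 x2 x3 =
      k1 * (deriv f2 x1 / (f2 x1)\<^sup>2) * P x2 + (k * \<beta> 0 * F0 x1 + c) / f2 x1"
    using V2_separable[OF h' P] by blast
  show ?thesis
    unfolding hyperbolic_family_def
  proof (intro exI conjI allI)
    show "k < 0"
      by fact
    show "k1\<^sup>2 / (f2 x)\<^sup>2 * deriv (log_deriv f2) x = k" for x
      using h' k1_nz f2_nz[of x] by simp
    fix x1 x2 x3
    show "V1 x1 x2 x3 = c1 * exp (sqrt (- k) * x2) + c2 * exp (- sqrt (- k) * x2)"
      by (simp add: V1_eq_\<alpha> \<alpha>_eq s_def)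
    show "V2 x1 x2 x3 = k1 * (deriv f2 x1 / (f2 x1)\<^sup>2) *
        (1 / sqrt (- k) * (c1 * exp (sqrt (- k) * x2) - c2 * exp (- sqrt (- k) * x2)) + \<beta> 0)
        + (\<beta> 0 * k * F0 x1 + c) / f2 x1"
      by (simp add: V2 P_def s_def mult.commute)
    show "V3 x1 x2 x3 = \<beta> 0"
      by (rule V3_eq_const)
  qed
qed

lemma in_nonconst_families:
  "translation_family f2 V1 V2 V3 \<or> exponential_family k1 f2 F0 V1 V2 V3
     \<or> trigonometric_family k1 f2 F0 V1 V2 V3 \<or> hyperbolic_family k1 f2 F0 V1 V2 V3"
proof (cases "\<forall>x. \<alpha> x = 0")
  case True
  then show ?thesis
    using translation_family_if_\<alpha>_zero by blast
next
  case False
  then obtain y0 where "\<alpha> y0 \<noteq> 0"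
    by blast
  then obtain k where h': "\<And>x. deriv (log_deriv f2) x = k * (f2 x)\<^sup>2 / k1\<^sup>2"
    and \<alpha>'': "\<And>x. deriv (deriv \<alpha>) x = - k * \<alpha> x"
    using separation_constant by blast
  consider "k = 0" | "0 < k" | "k < 0"
    by linarith
  then show ?thesis
  proof cases
    case 1
    then show ?thesis
      using exponential_family_if_k_zero h' \<alpha>'' by simp
  next
    case 2
    then show ?thesis
      using trigonometric_family_if_k_pos h' \<alpha>'' by blast
  next
    case 3
    then show ?thesis
      using hyperbolic_family_if_k_neg h' \<alpha>'' by blast
  qed
qed

end

lemma (in killing_frame) killing_families:
  "translation_family f2 V1 V2 V3 \<or> flat_family k1 k3 f2 V1 V2 V3 \<or> exponential_family k1 f2 F0 V1 V2 V3
     \<or> trigonometric_family k1 f2 F0 V1 V2 V3 \<or> hyperbolic_family k1 f2 F0 V1 V2 V3"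
proof (cases "\<forall>x. deriv f2 x = 0")
  case True
  then have "f2 x = f2 0" for x
    using DERIV_isconst_all[of f2 x 0] f2_deriv by metis
  then interpret killing_frame_const k1 k3 f2 F0 V1 V2 V3 "f2 0"
    by (intro killing_frame_const.intro killing_frame_axioms killing_frame_const_axioms.intro)
  show ?thesis
    using in_flat_family by blast
next
  case False
  then obtain x0 where "deriv f2 x0 \<noteq> 0"
    by blast
  then interpret killing_frame_nonconst k1 k3 f2 F0 V1 V2 V3 x0
    by (intro killing_frame_nonconst.intro killing_frame_axioms killing_frame_nonconst_axioms.intro)
  show ?thesis
    using in_nonconst_families by blast
qed

lemma is_killing_iff_families:
  assumes k1: "k1 \<noteq> 0" and k3: "k3 \<noteq> 0" and f2_smooth: "smooth1 f2" and f2_nz: "\<And>x. f2 x \<noteq> 0"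
    and F0: "\<And>x. (F0 has_real_derivative - (f2 x)\<^sup>2 / k1) (at x)"
    and V_smooth: "smooth3 V1" "smooth3 V2" "smooth3 V3"
  shows "is_killing (frame_metric k1 f2 k3) (frame_field k1 f2 k3 V1 V2 V3) \<longleftrightarrow>
    translation_family f2 V1 V2 V3 \<or> flat_family k1 k3 f2 V1 V2 V3 \<or> exponential_family k1 f2 F0 V1 V2 V3
      \<or> trigonometric_family k1 f2 F0 V1 V2 V3 \<or> hyperbolic_family k1 f2 F0 V1 V2 V3"
proof
  assume "is_killing (frame_metric k1 f2 k3) (frame_field k1 f2 k3 V1 V2 V3)"
  with assms have "killing_frame k1 k3 f2 F0 V1 V2 V3"
    by (simp add: killing_frame_def)
  then show "translation_family f2 V1 V2 V3 \<or> flat_family k1 k3 f2 V1 V2 V3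
      \<or> exponential_family k1 f2 F0 V1 V2 V3 \<or> trigonometric_family k1 f2 F0 V1 V2 V3
      \<or> hyperbolic_family k1 f2 F0 V1 V2 V3"
    by (rule killing_frame.killing_families)
next
  have f2: "(f2 has_real_derivative deriv f2 x) (at x)" for x
    by (rule smooth1_has_derivatives(1)[OF f2_smooth])
  assume "translation_family f2 V1 V2 V3 \<or> flat_family k1 k3 f2 V1 V2 V3
      \<or> exponential_family k1 f2 F0 V1 V2 V3 \<or> trigonometric_family k1 f2 F0 V1 V2 V3
      \<or> hyperbolic_family k1 f2 F0 V1 V2 V3"
  then show "is_killing (frame_metric k1 f2 k3) (frame_field k1 f2 k3 V1 V2 V3)"
    using is_killing_translation_family[OF k1 k3 f2 f2_nz]
      is_killing_flat_family[of k1 k3 f2, OF k1 k3 f2_nz]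
      is_killing_exponential_family[OF k1 k3 f2_nz F0]
      is_killing_trigonometric_family[OF k1 k3 f2_smooth f2_nz F0]
      is_killing_hyperbolic_family[OF k1 k3 f2_smooth f2_nz F0]
    by blast
qed

theorem mainTheorem11:
  fixes k1 k3 :: real
    and f2 F0 :: "real \<Rightarrow> real"
    and V1 V2 V3 :: "real \<Rightarrow> real \<Rightarrow> real \<Rightarrow> real"
  assumes hk1: "k1 \<noteq> 0" and hk3: "k3 \<noteq> 0"
    and hf2: "smooth1 f2" and hf2nz: "\<forall>x. f2 x \<noteq> 0"
    and hF0: "\<forall>x. (F0 has_real_derivative (- (f2 x)\<^sup>2 / k1)) (at x)"
    and hV: "smooth3 V1" "smooth3 V2" "smooth3 V3"
  shows "is_killing
           (\<lambda>i j x1 x2 x3. if i \<noteq> j then 0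
                           else if i = 1 then 1 / k1\<^sup>2
                           else if i = 2 then 1 / (f2 x1)\<^sup>2
                           else 1 / k3\<^sup>2)
           (\<lambda>i x1 x2 x3. if i = 1 then k1 * V1 x1 x2 x3
                         else if i = 2 then f2 x1 * V2 x1 x2 x3
                         else k3 * V3 x1 x2 x3)
    \<longleftrightarrow>
    ((\<exists>c1 c2. \<forall>x1 x2 x3. V1 x1 x2 x3 = 0 \<and> V2 x1 x2 x3 = c1 / f2 x1 \<and> V3 x1 x2 x3 = c2)
   \<or> (\<exists>k2. (\<forall>x. f2 x = k2) \<and>
        (\<exists>c1 c2 c3 c4 c5 c6. \<forall>x1 x2 x3.
           V1 x1 x2 x3 = c1 * x2 + c2 * x3 + c3 \<and>
           V2 x1 x2 x3 = - (c1 * k2 / k1) * x1 - c4 * k2 * x3 + c5 \<and>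
           V3 x1 x2 x3 = - (c2 * k3 / k1) * x1 + c4 * k3 * x2 + c6))
   \<or> (\<exists>a1 a2. a1 \<noteq> 0 \<and> a2 \<noteq> 0 \<and> (\<forall>x. f2 x = a1 * exp (a2 * x)) \<and>
        (\<exists>c1 c2 c3 c4. \<forall>x1 x2 x3.
           V1 x1 x2 x3 = c1 * x2 + c2 \<and>
           V2 x1 x2 x3 = k1 * (deriv f2 x1 / (f2 x1)\<^sup>2) * (c1 / 2 * x2\<^sup>2 + c2 * x2 + c3)
                         + (c1 * F0 x1 + c4) / f2 x1 \<and>
           V3 x1 x2 x3 = c3))
   \<or> (\<exists>k. 0 < k \<and>
        (\<forall>x. k1\<^sup>2 / (f2 x)\<^sup>2 * deriv (\<lambda>t. deriv f2 t / f2 t) x = k) \<and>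
        (\<exists>c1 c2 c3 c4. \<forall>x1 x2 x3.
           V1 x1 x2 x3 = c1 * cos (sqrt k * x2) + c2 * sin (sqrt k * x2) \<and>
           V2 x1 x2 x3 = k1 * (deriv f2 x1 / (f2 x1)\<^sup>2) *
                           (1 / sqrt k * (c1 * sin (sqrt k * x2) - c2 * cos (sqrt k * x2)) + c3)
                         + (c3 * k * F0 x1 + c4) / f2 x1 \<and>
           V3 x1 x2 x3 = c3))
   \<or> (\<exists>k. k < 0 \<and>
        (\<forall>x. k1\<^sup>2 / (f2 x)\<^sup>2 * deriv (\<lambda>t. deriv f2 t / f2 t) x = k) \<and>
        (\<exists>c1 c2 c3 c4. \<forall>x1 x2 x3.
           V1 x1 x2 x3 = c1 * exp (sqrt (- k) * x2) + c2 * exp (- sqrt (- k) * x2) \<and>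
           V2 x1 x2 x3 = k1 * (deriv f2 x1 / (f2 x1)\<^sup>2) *
                           (1 / sqrt (- k) * (c1 * exp (sqrt (- k) * x2) - c2 * exp (- sqrt (- k) * x2)) + c3)
                         + (c3 * k * F0 x1 + c4) / f2 x1 \<and>
           V3 x1 x2 x3 = c3)))"
  using is_killing_iff_families[OF hk1 hk3 hf2 hf2nz[rule_format] hF0[rule_format] hV]
  unfolding translation_family_def flat_family_def exponential_family_def
    trigonometric_family_def hyperbolic_family_def log_deriv_def[abs_def] .

end
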